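(* Let $m\ge 3$ and let $WC_m$ denote the fully whiskered $2m$-cycle graph. Then $M_2(WC_m)\simeq S^{2m-1}$.
   Context: The fully whiskered graph of a graph $G$ is obtained by attaching a leaf (a new vertex joined by one edge) to every vertex of $G$; $WC_m$ is the fully whiskered graph of the cycle on $2m$ vertices. A $2$-matching of a graph is a set of edges such that every vertex has degree at most $2$ in it. $M_2(G)$ is the simplicial complex whose vertices are the edges of $G$ and whose faces are the $2$-matchings of $G$. *)

theory Defs
  imports "HOL-Analysis.Analysis"
begin

text \<open>Simple graphs are given by their edge sets; an edge is a 2-element set of vertices.\<close>

text \<open>The fully whiskered 2m-cycle WC_m: cycle vertices (i, False) for i < 2m, with edges
  {(i,False), ((i+1) mod 2m, False)}, and leaves (i, True) attached by edges {(i,False),(i,True)}.\<close>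
definition whiskered_cycle_edges :: "nat \<Rightarrow> (nat \<times> bool) set set" where
  "whiskered_cycle_edges m =
     {{(i, False), ((i + 1) mod (2 * m), False)} | i. i < 2 * m}
   \<union> {{(i, False), (i, True)} | i. i < 2 * m}"

definition two_matching :: "'v set set \<Rightarrow> 'v set set \<Rightarrow> bool" where
  "two_matching G F \<longleftrightarrow> F \<subseteq> G \<and> (\<forall>v. card {e \<in> F. v \<in> e} \<le> 2)"

definition two_matching_complex :: "'v set set \<Rightarrow> 'v set set set" where
  "two_matching_complex G = {F. two_matching G F}"

text \<open>Geometric realization of a (finite) abstract simplicial complex K (given as its set of
  faces) as a subspace of the product space of real-valued functions on vertices:
  the points are the convex combinations of vertices whose support is a face.\<close>
definition geometric_realization :: "'a set set \<Rightarrow> ('a \<Rightarrow> real) topology" where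
  "geometric_realization K =
     subtopology (powertop_real UNIV)
       {f. (\<forall>v. 0 \<le> f v) \<and> {v. f v \<noteq> 0} \<in> K \<and> (\<Sum>v\<in>{v. f v \<noteq> 0}. f v) = 1}"

end

theory Submission
  imports Defs
begin

text \<open>Write a point of the realization as weights \<open>a k\<close> on the cycle edges \<open>{k, k + 1}\<close> and
  \<open>b k\<close> on the whiskers at \<open>k\<close> (indices mod \<open>n\<close>). The linear map
  \<open>phi k = a k - b k - b (k + 1)\<close> never vanishes on the complex: otherwise a positive whisker
  weight \<open>b j\<close> would force both cycle edges at \<open>j\<close> to be positive as well, and a 2-matching
  cannot contain all three edges at a vertex. So \<open>phi / |phi|\<close> maps the realization to the
  sphere \<open>nsphere (n - 1)\<close>. Conversely, every \<open>u\<close> is \<open>phi\<close> of the nonnegative weights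
  \<open>a k = max 0 (u k) + max 0 (- u (k + 1))\<close>, \<open>b k = max 0 (- u k)\<close>, and any nonnegative
  weights with \<open>phi \<noteq> 0\<close> can be pushed into the complex without changing \<open>phi\<close>: peel equal
  amounts off the three edges at each cycle vertex until one of them vanishes, then normalise.
  This yields a section of \<open>phi / |phi|\<close> and, applied along straight lines, a homotopy from the
  composite to the identity. Nothing depends on the parity of the cycle length \<open>n \<ge> 3\<close>.\<close>

lemma card_Int_triple_le_2_iff:
  assumes "x \<noteq> y" "x \<noteq> z" "y \<noteq> z"
  shows "card (F \<inter> {x, y, z}) \<le> 2 \<longleftrightarrow> \<not> (x \<in> F \<and> y \<in> F \<and> z \<in> F)"
proof (cases "x \<in> F \<and> y \<in> F \<and> z \<in> F")
  case True
  then have "F \<inter> {x, y, z} = {x, y, z}" by auto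
  with True show ?thesis using assms by simp
next
  case False
  then obtain u v where "F \<inter> {x, y, z} \<subseteq> {u, v}" by blast
  then have "card (F \<inter> {x, y, z}) \<le> card {u, v}" by (simp add: card_mono)
  also have "\<dots> \<le> 2" by (simp add: card_insert_if)
  finally show ?thesis using False by simp
qed

lemma topspace_geometric_realization:
  assumes "finite V" and "\<And>F. F \<in> K \<Longrightarrow> F \<subseteq> V"
  shows "f \<in> topspace (geometric_realization K) \<longleftrightarrow>
           (\<forall>v. 0 \<le> f v) \<and> {v. f v \<noteq> 0} \<in> K \<and> sum f V = 1"
proof -
  have "sum f V = sum f {v. f v \<noteq> 0}" if "{v. f v \<noteq> 0} \<in> K"
    using assms that by (intro sum.mono_neutral_right) auto
  then show ?thesis unfolding geometric_realization_def by auto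
qed

lemma continuous_map_geometric_realization_coordinate:
  "continuous_map (geometric_realization K) euclideanreal (\<lambda>f. f v)"
  unfolding geometric_realization_def
  by (intro continuous_map_from_subtopology continuous_map_product_projection) simp

lemma continuous_map_into_geometric_realization:
  "continuous_map Z (geometric_realization K) g \<longleftrightarrow>
     (\<forall>v. continuous_map Z euclideanreal (\<lambda>z. g z v)) \<and>
     g \<in> topspace Z \<rightarrow> topspace (geometric_realization K)"
  unfolding geometric_realization_def continuous_map_in_subtopology continuous_map_componentwise_UNIV
  by auto

lemma continuous_map_into_nsphere:
  "continuous_map Z (nsphere d) g \<longleftrightarrow>
     (\<forall>k. continuous_map Z euclideanreal (\<lambda>z. g z k)) \<and> g \<in> topspace Z \<rightarrow> topspace (nsphere d)"
  unfolding nsphere continuous_map_in_subtopology continuous_map_componentwise_UNIV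
  by auto

definition sphere_normalize :: "nat \<Rightarrow> (nat \<Rightarrow> real) \<Rightarrow> nat \<Rightarrow> real" where
  "sphere_normalize d v = (\<lambda>k. v k / sqrt (\<Sum>i\<le>d. (v i)\<^sup>2))"

lemma sum_squares_pos: "i \<le> (d::nat) \<Longrightarrow> v i \<noteq> 0 \<Longrightarrow> 0 < (\<Sum>i\<le>d. (v i :: real)\<^sup>2)"
  by (rule sum_pos2[of _ i]) simp_all

lemma sphere_normalize_in_nsphere:
  assumes "\<forall>i>d. v i = 0" "i \<le> d" "v i \<noteq> 0"
  shows "sphere_normalize d v \<in> topspace (nsphere d)"
proof -
  let ?Q = "\<Sum>i\<le>d. (v i)\<^sup>2"
  have "0 < ?Q" using sum_squares_pos assms(2,3) .
  then have "(\<Sum>i\<le>d. (sphere_normalize d v i)\<^sup>2) = 1"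
    by (simp add: sphere_normalize_def power_divide flip: sum_divide_distrib)
  then show ?thesis using assms(1) by (simp add: nsphere sphere_normalize_def)
qed

lemma sphere_normalize_divide:
  assumes "0 < c" shows "sphere_normalize d (\<lambda>k. v k / c) = sphere_normalize d v"
proof -
  have "sqrt (\<Sum>i\<le>d. (v i / c)\<^sup>2) = sqrt (\<Sum>i\<le>d. (v i)\<^sup>2) / c"
    using assms by (simp add: power_divide real_sqrt_divide flip: sum_divide_distrib)
  then show ?thesis using assms by (simp add: sphere_normalize_def)
qed

lemma sphere_normalize_nsphere: "u \<in> topspace (nsphere d) \<Longrightarrow> sphere_normalize d u = u"
  by (simp add: nsphere sphere_normalize_def)

lemma nsphere_nonzero:
  assumes "u \<in> topspace (nsphere d)" shows "\<exists>k\<le>d. u k \<noteq> 0"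
proof (rule ccontr)
  assume "\<not> (\<exists>k\<le>d. u k \<noteq> 0)"
  then have "(\<Sum>i\<le>d. (u i)\<^sup>2) = 0" by simp
  with assms show False by (simp add: nsphere)
qed

lemma continuous_map_sphere_normalize:
  assumes "\<And>k. continuous_map Z euclideanreal (\<lambda>z. v z k)"
    and "\<And>z. z \<in> topspace Z \<Longrightarrow> \<forall>i>d. v z i = 0"
    and "\<And>z. z \<in> topspace Z \<Longrightarrow> \<exists>i\<le>d. v z i \<noteq> 0"
  shows "continuous_map Z (nsphere d) (\<lambda>z. sphere_normalize d (v z))"
proof -
  have "sqrt (\<Sum>i\<le>d. (v z i)\<^sup>2) \<noteq> 0" if "z \<in> topspace Z" for z
    using assms(3)[OF that] sum_squares_pos by fastforce
  then have "continuous_map Z euclideanreal (\<lambda>z. sphere_normalize d (v z) k)" for k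
    unfolding sphere_normalize_def using assms(1) by (intro continuous_intros) auto
  moreover have "sphere_normalize d (v z) \<in> topspace (nsphere d)" if "z \<in> topspace Z" for z
    using assms(2,3)[OF that] sphere_normalize_in_nsphere by blast
  ultimately show ?thesis by (simp add: continuous_map_into_nsphere)
qed

definition whiskered_cycle :: "nat \<Rightarrow> (nat \<times> bool) set set" where
  "whiskered_cycle n =
     {{(i, False), (Suc i mod n, False)} | i. i < n} \<union> {{(i, False), (i, True)} | i. i < n}"

lemma whiskered_cycle_edges_eq: "whiskered_cycle_edges m = whiskered_cycle (2 * m)"
  by (simp add: whiskered_cycle_edges_def whiskered_cycle_def)

locale whiskered_cycle_graph =
  fixes n :: nat
  assumes three_le: "3 \<le> n"
begin

abbreviation G :: "(nat \<times> bool) set set" where "G \<equiv> whiskered_cycle n"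

definition succ :: "nat \<Rightarrow> nat" where "succ k = (if Suc k = n then 0 else Suc k)"
definition pred :: "nat \<Rightarrow> nat" where "pred k = (if k = 0 then n - 1 else k - 1)"

lemma succ_less: "k < n \<Longrightarrow> succ k < n"
  and pred_less: "k < n \<Longrightarrow> pred k < n"
  and succ_pred: "k < n \<Longrightarrow> succ (pred k) = k"
  and pred_neq: "k < n \<Longrightarrow> pred k \<noteq> k"
  using three_le by (auto simp: succ_def pred_def)

definition cycle_edge :: "nat \<Rightarrow> (nat \<times> bool) set" where
  "cycle_edge k = {(k, False), (succ k, False)}"
definition whisker :: "nat \<Rightarrow> (nat \<times> bool) set" where
  "whisker k = {(k, False), (k, True)}"

lemma Suc_mod_eq_succ: "k < n \<Longrightarrow> Suc k mod n = succ k"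
  by (simp add: succ_def mod_Suc)

lemma whiskered_cycle_eq: "G = cycle_edge ` {..<n} \<union> whisker ` {..<n}"
proof -
  have "{{(i, False), (Suc i mod n, False)} | i. i < n} = (\<lambda>i. {(i, False), (Suc i mod n, False)}) ` {..<n}"
    by blast
  also have "\<dots> = cycle_edge ` {..<n}"
    by (rule image_cong) (simp_all add: cycle_edge_def Suc_mod_eq_succ)
  finally show ?thesis
    unfolding whiskered_cycle_def whisker_def by blast
qed

lemma finite_whiskered_cycle: "finite G"
  by (simp add: whiskered_cycle_eq)

lemma cycle_edge_inject:
  assumes "i < n" "j < n" shows "cycle_edge i = cycle_edge j \<longleftrightarrow> i = j"
proof
  assume "cycle_edge i = cycle_edge j"
  then have "i = j \<or> i = succ j" "j = i \<or> j = succ i" by (auto simp: cycle_edge_def)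
  then show "i = j" using assms three_le by (auto simp: succ_def split: if_splits)
qed simp

lemma whisker_inject: "whisker i = whisker j \<longleftrightarrow> i = j"
  by (auto simp: whisker_def)

lemma cycle_edge_neq_whisker: "cycle_edge i \<noteq> whisker j"
  by (auto simp: cycle_edge_def whisker_def)

lemma edges_at_cycle_vertex:
  assumes "j < n"
  shows "{e \<in> G. (j, False) \<in> e} = {cycle_edge (pred j), cycle_edge j, whisker j}"
proof -
  have "(j, False) \<in> cycle_edge k \<longleftrightarrow> k = j \<or> k = pred j" if "k < n" for k
    using that assms by (auto simp: cycle_edge_def succ_def pred_def)
  then show ?thesis
    using assms pred_less by (auto simp: whiskered_cycle_eq whisker_def)
qed

lemma edges_at_leaf: "{e \<in> G. (j, True) \<in> e} \<subseteq> {whisker j}"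
  by (auto simp: whiskered_cycle_eq whisker_def cycle_edge_def)

lemma edges_at_non_vertex: "n \<le> j \<Longrightarrow> {e \<in> G. (j, b) \<in> e} = {}"
  by (auto simp: whiskered_cycle_eq whisker_def cycle_edge_def succ_def split: if_splits)

lemma edges_at_cycle_vertex_distinct:
  assumes "j < n"
  shows "cycle_edge (pred j) \<noteq> cycle_edge j" "cycle_edge (pred j) \<noteq> whisker j"
    "cycle_edge j \<noteq> whisker j"
  using assms pred_less pred_neq by (simp_all add: cycle_edge_inject cycle_edge_neq_whisker)

text \<open>Leaves have degree 1, so only the cycle vertices constrain a 2-matching.\<close>
lemma card_edges_at_le_2_iff:
  assumes "F \<subseteq> G"
  shows "card {e \<in> F. v \<in> e} \<le> 2 \<longleftrightarrow>
    (\<forall>j<n. v = (j, False) \<longrightarrow> \<not> (cycle_edge (pred j) \<in> F \<and> cycle_edge j \<in> F \<and> whisker j \<in> F))"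
proof -
  have restrict: "{e \<in> F. v \<in> e} = F \<inter> {e \<in> G. v \<in> e}" using assms by auto
  obtain j b where v: "v = (j, b)" by fastforce
  consider "j < n" "\<not> b" | "b" | "n \<le> j" by force
  then show ?thesis
  proof cases
    case 1
    then have vj: "v = (j, False)" using v by simp
    have "card {e \<in> F. v \<in> e} \<le> 2 \<longleftrightarrow>
            \<not> (cycle_edge (pred j) \<in> F \<and> cycle_edge j \<in> F \<and> whisker j \<in> F)"
      unfolding restrict unfolding vj edges_at_cycle_vertex[OF 1(1)]
      by (rule card_Int_triple_le_2_iff[OF edges_at_cycle_vertex_distinct[OF 1(1)]])
    then show ?thesis using 1 vj by auto
  next
    case 2
    have "card (F \<inter> {e \<in> G. v \<in> e}) \<le> card {whisker j}"
      by (rule card_mono) (use edges_at_leaf v 2 in auto)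
    then show ?thesis unfolding restrict using v 2 by auto
  next
    case 3
    then show ?thesis unfolding restrict unfolding v edges_at_non_vertex[OF 3] by simp
  qed
qed

lemma two_matching_whiskered_cycle_iff:
  "two_matching G F \<longleftrightarrow>
     F \<subseteq> G \<and> (\<forall>j<n. \<not> (cycle_edge (pred j) \<in> F \<and> cycle_edge j \<in> F \<and> whisker j \<in> F))"
proof -
  have "(\<forall>v. card {e \<in> F. v \<in> e} \<le> 2) \<longleftrightarrow>
          (\<forall>j<n. \<not> (cycle_edge (pred j) \<in> F \<and> cycle_edge j \<in> F \<and> whisker j \<in> F))"
    if "F \<subseteq> G" for F
    unfolding card_edges_at_le_2_iff[OF that] by blast
  then show ?thesis unfolding two_matching_def by blast
qed

lemma sum_whiskered_cycle: "sum f G = (\<Sum>k<n. f (cycle_edge k) + f (whisker k))"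
proof -
  have "sum f G = sum f (cycle_edge ` {..<n}) + sum f (whisker ` {..<n})"
    unfolding whiskered_cycle_eq
    by (rule sum.union_disjoint) (auto simp: cycle_edge_neq_whisker)
  also have "\<dots> = (\<Sum>k<n. f (cycle_edge k)) + (\<Sum>k<n. f (whisker k))"
    by (simp add: sum.reindex inj_on_def cycle_edge_inject whisker_inject)
  finally show ?thesis by (simp add: sum.distrib)
qed

abbreviation X :: "((nat \<times> bool) set \<Rightarrow> real) topology" where
  "X \<equiv> geometric_realization (two_matching_complex G)"

definition edge_weights :: "(nat \<Rightarrow> real) \<Rightarrow> (nat \<Rightarrow> real) \<Rightarrow> (nat \<times> bool) set \<Rightarrow> real" where
  "edge_weights a b e =
     (\<Sum>k<n. (if e = cycle_edge k then a k else 0) + (if e = whisker k then b k else 0))"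

lemma edge_weights_cycle_edge [simp]:
  assumes "k < n" shows "edge_weights a b (cycle_edge k) = a k"
proof -
  have "edge_weights a b (cycle_edge k) = (\<Sum>j<n. if k = j then a j else 0)"
    unfolding edge_weights_def using assms
    by (intro sum.cong) (auto simp: cycle_edge_inject cycle_edge_neq_whisker)
  then show ?thesis using assms by simp
qed

lemma edge_weights_whisker [simp]: "k < n \<Longrightarrow> edge_weights a b (whisker k) = b k"
  by (simp add: edge_weights_def whisker_inject cycle_edge_neq_whisker[symmetric])

lemma edge_weights_outside: "e \<notin> G \<Longrightarrow> edge_weights a b e = 0"
  by (auto simp: edge_weights_def whiskered_cycle_eq intro!: sum.neutral)

lemma edge_weights_of_restriction:
  assumes "\<And>e. e \<notin> G \<Longrightarrow> f e = 0"
  shows "edge_weights (\<lambda>k. f (cycle_edge k)) (\<lambda>k. f (whisker k)) = f"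
proof
  fix e show "edge_weights (\<lambda>k. f (cycle_edge k)) (\<lambda>k. f (whisker k)) e = f e"
    using assms edge_weights_outside by (cases "e \<in> G") (auto simp: whiskered_cycle_eq)
qed

lemma edge_weights_cong:
  "(\<And>k. k < n \<Longrightarrow> a k = a' k) \<Longrightarrow> (\<And>k. k < n \<Longrightarrow> b k = b' k) \<Longrightarrow>
     edge_weights a b = edge_weights a' b'"
  unfolding edge_weights_def by (intro ext sum.cong) auto

lemma continuous_map_edge_weights:
  assumes "\<And>k. k < n \<Longrightarrow> continuous_map Z euclideanreal (\<lambda>z. a z k)"
    and "\<And>k. k < n \<Longrightarrow> continuous_map Z euclideanreal (\<lambda>z. b z k)"
  shows "continuous_map Z euclideanreal (\<lambda>z. edge_weights (a z) (b z) e)"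
proof -
  have if_const: "continuous_map Z euclideanreal (\<lambda>z. if P then g z else 0)"
    if "P \<Longrightarrow> continuous_map Z euclideanreal g" for P and g :: "_ \<Rightarrow> real"
    using that by (cases P) simp_all
  show ?thesis
    unfolding edge_weights_def using assms by (intro continuous_map_sum continuous_map_add if_const) auto
qed

definition nonneg_weights :: "(nat \<Rightarrow> real) \<Rightarrow> (nat \<Rightarrow> real) \<Rightarrow> bool" where
  "nonneg_weights a b \<longleftrightarrow> (\<forall>k<n. 0 \<le> a k \<and> 0 \<le> b k)"

definition two_matching_weights :: "(nat \<Rightarrow> real) \<Rightarrow> (nat \<Rightarrow> real) \<Rightarrow> bool" where
  "two_matching_weights a b \<longleftrightarrow> (\<forall>j<n. a (pred j) = 0 \<or> a j = 0 \<or> b j = 0)"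

definition total_weight :: "(nat \<Rightarrow> real) \<Rightarrow> (nat \<Rightarrow> real) \<Rightarrow> real" where
  "total_weight a b = (\<Sum>k<n. a k + b k)"

lemma nonneg_weights_divide:
  "nonneg_weights a b \<Longrightarrow> 0 < c \<Longrightarrow> nonneg_weights (\<lambda>k. a k / c) (\<lambda>k. b k / c)"
  by (simp add: nonneg_weights_def)

lemma two_matching_weights_divide:
  "two_matching_weights a b \<Longrightarrow> two_matching_weights (\<lambda>k. a k / c) (\<lambda>k. b k / c)"
  by (auto simp: two_matching_weights_def)

lemma total_weight_divide: "total_weight (\<lambda>k. a k / c) (\<lambda>k. b k / c) = total_weight a b / c"
  by (simp add: total_weight_def add_divide_distrib sum_divide_distrib)

lemma topspace_realization_iff:
  "f \<in> topspace X \<longleftrightarrow> (\<forall>e. e \<notin> G \<longrightarrow> f e = 0) \<and>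
     nonneg_weights (\<lambda>k. f (cycle_edge k)) (\<lambda>k. f (whisker k)) \<and>
     two_matching_weights (\<lambda>k. f (cycle_edge k)) (\<lambda>k. f (whisker k)) \<and>
     total_weight (\<lambda>k. f (cycle_edge k)) (\<lambda>k. f (whisker k)) = 1"
proof -
  have "f \<in> topspace X \<longleftrightarrow>
          (\<forall>e. 0 \<le> f e) \<and> {e. f e \<noteq> 0} \<in> two_matching_complex G \<and> sum f G = 1"
    by (rule topspace_geometric_realization[OF finite_whiskered_cycle])
       (simp add: two_matching_complex_def two_matching_def)
  then have "f \<in> topspace X \<longleftrightarrow> (\<forall>e. 0 \<le> f e) \<and> two_matching G {e. f e \<noteq> 0} \<and> sum f G = 1"
    by (simp add: two_matching_complex_def)
  moreover have "(\<forall>e. 0 \<le> f e) \<longleftrightarrow> nonneg_weights (\<lambda>k. f (cycle_edge k)) (\<lambda>k. f (whisker k))"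
    if vanish: "\<forall>e. e \<notin> G \<longrightarrow> f e = 0"
  proof
    assume nn: "nonneg_weights (\<lambda>k. f (cycle_edge k)) (\<lambda>k. f (whisker k))"
    show "\<forall>e. 0 \<le> f e"
    proof
      fix e show "0 \<le> f e"
        using vanish nn by (cases "e \<in> G") (auto simp: nonneg_weights_def whiskered_cycle_eq)
    qed
  qed (simp add: nonneg_weights_def)
  ultimately show ?thesis
    by (auto simp: two_matching_whiskered_cycle_iff two_matching_weights_def total_weight_def
        sum_whiskered_cycle)
qed

lemma edge_weights_in_realization:
  assumes "nonneg_weights a b" "two_matching_weights a b" "total_weight a b = 1"
  shows "edge_weights a b \<in> topspace X"
proof -
  have "total_weight (\<lambda>k. edge_weights a b (cycle_edge k)) (\<lambda>k. edge_weights a b (whisker k)) =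
          total_weight a b"
    unfolding total_weight_def by (intro sum.cong) auto
  then show ?thesis
    using assms pred_less
    by (auto simp: topspace_realization_iff edge_weights_outside nonneg_weights_def
        two_matching_weights_def)
qed

definition phi :: "(nat \<Rightarrow> real) \<Rightarrow> (nat \<Rightarrow> real) \<Rightarrow> nat \<Rightarrow> real" where
  "phi a b k = (if k < n then a k - b k - b (succ k) else 0)"

lemma phi_linear:
  "phi (\<lambda>k. s * a k + t * a' k) (\<lambda>k. s * b k + t * b' k) k = s * phi a b k + t * phi a' b' k"
  by (simp add: phi_def algebra_simps)

lemma phi_cong:
  "(\<And>k. k < n \<Longrightarrow> a k = a' k) \<Longrightarrow> (\<And>k. k < n \<Longrightarrow> b k = b' k) \<Longrightarrow> phi a b = phi a' b'"
  by (auto simp: phi_def succ_less)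

text \<open>If \<open>phi a b = 0\<close>, every cycle edge weighs as much as the whiskers at its two ends;
  a positive whisker \<open>b j\<close> then forces both cycle edges at \<open>j\<close> to be positive as well.\<close>
lemma phi_nonzero:
  assumes nn: "nonneg_weights a b" and tm: "two_matching_weights a b"
    and total: "total_weight a b \<noteq> 0"
  shows "\<exists>k<n. phi a b k \<noteq> 0"
proof (rule ccontr)
  assume "\<not> (\<exists>k<n. phi a b k \<noteq> 0)"
  then have a_eq: "a k = b k + b (succ k)" if "k < n" for k
    using that by (auto simp: phi_def)
  have b0: "b j = 0" if j: "j < n" for j
  proof (rule ccontr)
    assume "b j \<noteq> 0"
    moreover have "0 \<le> b j" "0 \<le> b (succ j)" "0 \<le> b (pred j)"
      using nn j succ_less pred_less by (auto simp: nonneg_weights_def)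
    moreover have "a (pred j) = b (pred j) + b j"
      using a_eq[OF pred_less[OF j]] succ_pred[OF j] by simp
    moreover have "a (pred j) = 0 \<or> a j = 0 \<or> b j = 0"
      using tm j by (auto simp: two_matching_weights_def)
    ultimately show False using a_eq[OF j] by linarith
  qed
  then have "a k = 0" if "k < n" for k
    using a_eq[OF that] succ_less[OF that] b0 that by simp
  with b0 have "total_weight a b = 0" by (simp add: total_weight_def)
  with total show False ..
qed

text \<open>The retraction onto the complex peels equal amounts \<open>peel a b j\<close> off the three edges at
  each cycle vertex \<open>j\<close>; this does not change \<open>phi\<close>. Going once around the cycle, as much as
  possible is peeled at each vertex, given what vertex \<open>j - 1\<close> (and, for the last vertex, vertex
  \<open>0\<close>) has already taken from the shared cycle edges.\<close>
fun peel :: "(nat \<Rightarrow> real) \<Rightarrow> (nat \<Rightarrow> real) \<Rightarrow> nat \<Rightarrow> real" where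
  "peel a b 0 = min (b 0) (min (a (n - 1)) (a 0))"
| "peel a b (Suc j) = min (b (Suc j))
     (min (a j - peel a b j) (a (Suc j) - (if Suc j = n - 1 then peel a b 0 else 0)))"

definition trim_cycle :: "(nat \<Rightarrow> real) \<Rightarrow> (nat \<Rightarrow> real) \<Rightarrow> nat \<Rightarrow> real" where
  "trim_cycle a b k = a k - peel a b k - peel a b (succ k)"

definition trim_whisker :: "(nat \<Rightarrow> real) \<Rightarrow> (nat \<Rightarrow> real) \<Rightarrow> nat \<Rightarrow> real" where
  "trim_whisker a b k = b k - peel a b k"

lemma peel_bounds:
  assumes nn: "nonneg_weights a b" and "j < n"
  shows "0 \<le> peel a b j \<and> peel a b j \<le> b j \<and>
           peel a b j \<le> a j - (if j = n - 1 then peel a b 0 else 0)"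
  using assms(2)
proof (induction j)
  case 0
  then show ?case using nn three_le by (auto simp: nonneg_weights_def)
next
  case (Suc j)
  define c where "c = a (Suc j) - (if Suc j = n - 1 then peel a b 0 else 0)"
  have peel_Suc: "peel a b (Suc j) = min (b (Suc j)) (min (a j - peel a b j) c)"
    by (simp add: c_def)
  have "peel a b 0 \<le> a (n - 1)" by (simp add: min_le_iff_disj)
  then have "0 \<le> c"
    using nn Suc.prems by (auto simp: c_def nonneg_weights_def simp del: peel.simps)
  moreover have "0 \<le> a j - peel a b j"
    using Suc by (simp del: peel.simps split: if_splits)
  moreover have "0 \<le> b (Suc j)"
    using nn Suc.prems by (simp add: nonneg_weights_def)
  ultimately show ?case
    unfolding c_def[symmetric] peel_Suc by (simp add: min_le_iff_disj)
qed

lemma phi_trim: "phi (trim_cycle a b) (trim_whisker a b) = phi a b"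
  by (auto simp: phi_def trim_cycle_def trim_whisker_def)

lemma nonneg_trim:
  assumes nn: "nonneg_weights a b"
  shows "nonneg_weights (trim_cycle a b) (trim_whisker a b)"
  unfolding nonneg_weights_def
proof (intro allI impI conjI)
  fix k assume k: "k < n"
  have "peel a b (succ k) \<le> a k - peel a b k"
  proof (cases "Suc k = n")
    case True
    then have "succ k = 0" "k = n - 1" by (auto simp: succ_def)
    with peel_bounds[OF nn k] show ?thesis by (simp del: peel.simps)
  next
    case False
    then show ?thesis by (simp add: succ_def min_le_iff_disj)
  qed
  with peel_bounds[OF nn k] show "0 \<le> trim_cycle a b k" "0 \<le> trim_whisker a b k"
    by (simp_all add: trim_cycle_def trim_whisker_def del: peel.simps)
qed

lemma peel_cases:
  assumes "j < n"
  shows "peel a b j = b j \<or> peel a b j = a (pred j) - (if j = 0 then 0 else peel a b (pred j)) \<or>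
         peel a b j = a j - (if j = n - 1 then peel a b 0 else 0)"
proof (cases j)
  case 0
  then show ?thesis using three_le by (simp add: pred_def min_def)
next
  case (Suc i)
  then show ?thesis by (simp add: pred_def min_def del: peel.simps(1))
qed

lemma trim_nonpos_at_vertex:
  assumes nn: "nonneg_weights a b" and j: "j < n"
  shows "trim_cycle a b (pred j) \<le> 0 \<or> trim_cycle a b j \<le> 0 \<or> trim_whisker a b j \<le> 0"
proof -
  have peel_nn: "0 \<le> peel a b k" if "k < n" for k
    using peel_bounds[OF nn that] by simp
  have last: "succ j = 0" if "j = n - 1"
    using that three_le by (simp add: succ_def)
  from peel_cases[OF j] consider
      "peel a b j = b j"
    | "peel a b j = a (pred j) - (if j = 0 then 0 else peel a b (pred j))"
    | "peel a b j = a j - (if j = n - 1 then peel a b 0 else 0)"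
    by blast
  then show ?thesis
  proof cases
    case 1
    then show ?thesis by (simp add: trim_whisker_def)
  next
    case 2
    then have "trim_cycle a b (pred j) = (if j = 0 then 0 else peel a b (pred j)) - peel a b (pred j)"
      using succ_pred[OF j] by (simp add: trim_cycle_def del: peel.simps)
    moreover have "(if j = 0 then 0 else peel a b (pred j)) - peel a b (pred j) \<le> 0"
      using peel_nn[OF pred_less[OF j]] by auto
    ultimately show ?thesis by linarith
  next
    case 3
    then show ?thesis using peel_nn[OF succ_less[OF j]] last
      by (cases "j = n - 1") (simp_all add: trim_cycle_def del: peel.simps)
  qed
qed

lemma two_matching_trim:
  assumes nn: "nonneg_weights a b"
  shows "two_matching_weights (trim_cycle a b) (trim_whisker a b)"
  using nonneg_trim[OF nn] trim_nonpos_at_vertex[OF nn] pred_less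
  unfolding two_matching_weights_def nonneg_weights_def by (meson order.antisym)

lemma peel_eq_0:
  assumes nn: "nonneg_weights a b" and tm: "two_matching_weights a b" and "j < n"
  shows "peel a b j = 0"
proof -
  have at_vertex: "a (pred j) = 0 \<or> a j = 0 \<or> b j = 0" if "j < n" for j
    using tm that by (simp add: two_matching_weights_def)
  have nonneg: "0 \<le> a j" "0 \<le> b j" if "j < n" for j
    using nn that by (simp_all add: nonneg_weights_def)
  have peel_0: "peel a b 0 = 0"
    using at_vertex[of 0] nonneg[of 0] nonneg[of "n - 1"] three_le
    by (auto simp: pred_def min_def)
  show ?thesis using assms(3)
  proof (induction j)
    case (Suc j)
    then have "a j = 0 \<or> a (Suc j) = 0 \<or> b (Suc j) = 0"
      using at_vertex[of "Suc j"] by (simp add: pred_def)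
    with Suc nonneg[of j] nonneg[of "Suc j"] show ?case
      by (auto simp: peel_0 min_def simp del: peel.simps(1))
  qed (rule peel_0)
qed

abbreviation trimmed_total :: "(nat \<Rightarrow> real) \<Rightarrow> (nat \<Rightarrow> real) \<Rightarrow> real" where
  "trimmed_total a b \<equiv> total_weight (trim_cycle a b) (trim_whisker a b)"

definition retract :: "(nat \<Rightarrow> real) \<Rightarrow> (nat \<Rightarrow> real) \<Rightarrow> (nat \<times> bool) set \<Rightarrow> real" where
  "retract a b = edge_weights (\<lambda>k. trim_cycle a b k / trimmed_total a b)
                              (\<lambda>k. trim_whisker a b k / trimmed_total a b)"

lemma trimmed_total_pos:
  assumes nn: "nonneg_weights a b" and nz: "\<exists>k<n. phi a b k \<noteq> 0"
  shows "0 < trimmed_total a b"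
proof -
  have summand_nn: "0 \<le> trim_cycle a b k + trim_whisker a b k" if "k < n" for k
    using nonneg_trim[OF nn] that by (simp add: nonneg_weights_def)
  then have "0 \<le> trimmed_total a b"
    unfolding total_weight_def by (intro sum_nonneg) simp
  moreover have "trimmed_total a b \<noteq> 0"
  proof
    assume "trimmed_total a b = 0"
    then have "trim_cycle a b k + trim_whisker a b k = 0" if "k < n" for k
      using summand_nn that sum_nonneg_eq_0_iff[of "{..<n}" "\<lambda>k. trim_cycle a b k + trim_whisker a b k"]
      by (simp add: total_weight_def)
    then have "trim_cycle a b k = 0 \<and> trim_whisker a b k = 0" if "k < n" for k
      using nonneg_trim[OF nn] that by (force simp: nonneg_weights_def)
    then have "phi (trim_cycle a b) (trim_whisker a b) k = 0" for k
      by (simp add: phi_def succ_less)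
    with nz show False by (simp add: phi_trim)
  qed
  ultimately show ?thesis by simp
qed

lemma retract_in_realization:
  assumes "nonneg_weights a b" "\<exists>k<n. phi a b k \<noteq> 0"
  shows "retract a b \<in> topspace X"
  unfolding retract_def
  using trimmed_total_pos[OF assms] nonneg_trim[OF assms(1)] two_matching_trim[OF assms(1)]
  by (intro edge_weights_in_realization nonneg_weights_divide two_matching_weights_divide)
     (simp_all add: total_weight_divide)

lemma retract_of_realization:
  assumes "f \<in> topspace X"
  shows "retract (\<lambda>k. f (cycle_edge k)) (\<lambda>k. f (whisker k)) = f"
proof -
  let ?a = "\<lambda>k. f (cycle_edge k)" and ?b = "\<lambda>k. f (whisker k)"
  have f: "\<forall>e. e \<notin> G \<longrightarrow> f e = 0" "nonneg_weights ?a ?b" "two_matching_weights ?a ?b"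
    "total_weight ?a ?b = 1"
    using assms by (simp_all add: topspace_realization_iff)
  have trim: "trim_cycle ?a ?b k = ?a k" "trim_whisker ?a ?b k = ?b k" if "k < n" for k
    using peel_eq_0[OF f(2,3)] that succ_less by (simp_all add: trim_cycle_def trim_whisker_def)
  then have "trimmed_total ?a ?b = 1"
    using f(4) by (simp add: total_weight_def)
  then have "retract ?a ?b = edge_weights ?a ?b"
    unfolding retract_def by (intro edge_weights_cong) (simp_all add: trim)
  also have "\<dots> = f" using f(1) by (simp add: edge_weights_of_restriction)
  finally show ?thesis .
qed

lemma phi_retract:
  "phi (\<lambda>k. retract a b (cycle_edge k)) (\<lambda>k. retract a b (whisker k)) =
     (\<lambda>k. phi a b k / trimmed_total a b)"
proof -
  have "phi (\<lambda>k. retract a b (cycle_edge k)) (\<lambda>k. retract a b (whisker k)) =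
          phi (\<lambda>k. trim_cycle a b k / trimmed_total a b) (\<lambda>k. trim_whisker a b k / trimmed_total a b)"
    by (rule phi_cong) (simp_all add: retract_def)
  also have "\<dots> = (\<lambda>k. phi (trim_cycle a b) (trim_whisker a b) k / trimmed_total a b)"
    by (auto simp: phi_def diff_divide_distrib)
  finally show ?thesis by (simp add: phi_trim)
qed

lemma continuous_map_peel:
  assumes "\<And>k. k < n \<Longrightarrow> continuous_map Z euclideanreal (\<lambda>z. a z k)"
    and "\<And>k. k < n \<Longrightarrow> continuous_map Z euclideanreal (\<lambda>z. b z k)"
    and "j < n"
  shows "continuous_map Z euclideanreal (\<lambda>z. peel (a z) (b z) j)"
proof -
  have peel_0: "continuous_map Z euclideanreal (\<lambda>z. peel (a z) (b z) 0)"
    using assms(1,2) three_le by (simp add: continuous_map_real_min)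
  show ?thesis using assms(3)
  proof (induction j)
    case (Suc j)
    then show ?case
      using assms(1,2) peel_0
      by (simp del: peel.simps(1) add: continuous_map_real_min continuous_map_diff)
  qed (rule peel_0)
qed

lemma continuous_map_retract:
  assumes cont_a: "\<And>k. k < n \<Longrightarrow> continuous_map Z euclideanreal (\<lambda>z. a z k)"
    and cont_b: "\<And>k. k < n \<Longrightarrow> continuous_map Z euclideanreal (\<lambda>z. b z k)"
    and nn: "\<And>z. z \<in> topspace Z \<Longrightarrow> nonneg_weights (a z) (b z)"
    and nz: "\<And>z. z \<in> topspace Z \<Longrightarrow> \<exists>k<n. phi (a z) (b z) k \<noteq> 0"
  shows "continuous_map Z X (\<lambda>z. retract (a z) (b z))"
proof -
  note cont_peel = continuous_map_peel[OF cont_a cont_b]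
  have cont_trim:
    "continuous_map Z euclideanreal (\<lambda>z. trim_cycle (a z) (b z) k)"
    "continuous_map Z euclideanreal (\<lambda>z. trim_whisker (a z) (b z) k)" if "k < n" for k
    unfolding trim_cycle_def trim_whisker_def using that succ_less[OF that]
    by (simp_all add: continuous_map_diff cont_a cont_b cont_peel)
  have cont_total: "continuous_map Z euclideanreal (\<lambda>z. trimmed_total (a z) (b z))"
    unfolding total_weight_def by (intro continuous_map_sum continuous_map_add cont_trim) auto
  have "trimmed_total (a z) (b z) \<noteq> 0" if "z \<in> topspace Z" for z
    using trimmed_total_pos[OF nn[OF that] nz[OF that]] by simp
  then have "continuous_map Z euclideanreal (\<lambda>z. retract (a z) (b z) e)" for e
    unfolding retract_def
    by (intro continuous_map_edge_weights continuous_map_real_divide cont_trim cont_total)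
  then show ?thesis
    using retract_in_realization[OF nn nz]
    by (simp add: continuous_map_into_geometric_realization)
qed

lemma phi_realization_nonzero:
  assumes "f \<in> topspace X"
  shows "\<exists>k<n. phi (\<lambda>k. f (cycle_edge k)) (\<lambda>k. f (whisker k)) k \<noteq> 0"
  using assms by (intro phi_nonzero) (simp_all add: topspace_realization_iff)

definition to_sphere :: "((nat \<times> bool) set \<Rightarrow> real) \<Rightarrow> nat \<Rightarrow> real" where
  "to_sphere f = sphere_normalize (n - 1) (phi (\<lambda>k. f (cycle_edge k)) (\<lambda>k. f (whisker k)))"

definition lift_cycle :: "(nat \<Rightarrow> real) \<Rightarrow> nat \<Rightarrow> real" where
  "lift_cycle u k = max 0 (u k) + max 0 (- u (succ k))"

definition lift_whisker :: "(nat \<Rightarrow> real) \<Rightarrow> nat \<Rightarrow> real" where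
  "lift_whisker u k = max 0 (- u k)"

definition from_sphere :: "(nat \<Rightarrow> real) \<Rightarrow> (nat \<times> bool) set \<Rightarrow> real" where
  "from_sphere u = retract (lift_cycle u) (lift_whisker u)"

lemma phi_lift: "k < n \<Longrightarrow> phi (lift_cycle u) (lift_whisker u) k = u k"
  by (simp add: phi_def lift_cycle_def lift_whisker_def max_def)

lemma nonneg_lift: "nonneg_weights (lift_cycle u) (lift_whisker u)"
  by (simp add: nonneg_weights_def lift_cycle_def lift_whisker_def)

lemma nsphere_nonzero_coordinate:
  assumes "u \<in> topspace (nsphere (n - 1))" shows "\<exists>k<n. u k \<noteq> 0"
proof -
  obtain k where "k \<le> n - 1" "u k \<noteq> 0"
    using nsphere_nonzero[OF assms] by blast
  then show ?thesis using three_le by (intro exI[of _ k]) auto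
qed

lemma continuous_map_phi_realization:
  "continuous_map X euclideanreal (\<lambda>f. phi (\<lambda>k. f (cycle_edge k)) (\<lambda>k. f (whisker k)) k)"
  unfolding phi_def
  by (simp add: continuous_map_diff continuous_map_geometric_realization_coordinate)

lemma continuous_map_to_sphere: "continuous_map X (nsphere (n - 1)) to_sphere"
  unfolding to_sphere_def
proof (rule continuous_map_sphere_normalize)
  fix f assume "f \<in> topspace X"
  then obtain k where "k < n" "phi (\<lambda>k. f (cycle_edge k)) (\<lambda>k. f (whisker k)) k \<noteq> 0"
    using phi_realization_nonzero by blast
  then show "\<exists>i\<le>n - 1. phi (\<lambda>k. f (cycle_edge k)) (\<lambda>k. f (whisker k)) i \<noteq> 0"
    by (intro exI[of _ k]) auto
qed (rule continuous_map_phi_realization, auto simp: phi_def)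

lemma continuous_map_from_sphere: "continuous_map (nsphere (n - 1)) X from_sphere"
  unfolding from_sphere_def
proof (rule continuous_map_retract)
  fix k
  show "continuous_map (nsphere (n - 1)) euclideanreal (\<lambda>u. lift_cycle u k)"
    "continuous_map (nsphere (n - 1)) euclideanreal (\<lambda>u. lift_whisker u k)"
    unfolding lift_cycle_def lift_whisker_def
    by (intro continuous_intros continuous_map_nsphere_projection)+
next
  fix u assume "u \<in> topspace (nsphere (n - 1))"
  then obtain k where "k < n" "u k \<noteq> 0" using nsphere_nonzero_coordinate by blast
  then show "\<exists>k<n. phi (lift_cycle u) (lift_whisker u) k \<noteq> 0"
    using phi_lift by auto
qed (rule nonneg_lift)

lemma to_sphere_from_sphere:
  assumes u: "u \<in> topspace (nsphere (n - 1))"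
  shows "to_sphere (from_sphere u) = u"
proof -
  have "phi (lift_cycle u) (lift_whisker u) = u"
  proof
    fix k show "phi (lift_cycle u) (lift_whisker u) k = u k"
      using u phi_lift[of k u] three_le by (cases "k < n") (auto simp: nsphere phi_def)
  qed
  moreover have "0 < trimmed_total (lift_cycle u) (lift_whisker u)"
    by (rule trimmed_total_pos[OF nonneg_lift])
       (use nsphere_nonzero_coordinate[OF u] phi_lift in auto)
  ultimately show ?thesis
    using u by (simp add: to_sphere_def from_sphere_def phi_retract sphere_normalize_divide
        sphere_normalize_nsphere)
qed

definition blend_cycle :: "real \<Rightarrow> ((nat \<times> bool) set \<Rightarrow> real) \<Rightarrow> nat \<Rightarrow> real" where
  "blend_cycle t f k = t * f (cycle_edge k) + (1 - t) * lift_cycle (to_sphere f) k"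

definition blend_whisker :: "real \<Rightarrow> ((nat \<times> bool) set \<Rightarrow> real) \<Rightarrow> nat \<Rightarrow> real" where
  "blend_whisker t f k = t * f (whisker k) + (1 - t) * lift_whisker (to_sphere f) k"

lemma nonneg_blend:
  "f \<in> topspace X \<Longrightarrow> 0 \<le> t \<Longrightarrow> t \<le> 1 \<Longrightarrow> nonneg_weights (blend_cycle t f) (blend_whisker t f)"
  using nonneg_lift[of "to_sphere f"]
  by (simp add: topspace_realization_iff nonneg_weights_def blend_cycle_def blend_whisker_def)

text \<open>Along the straight line from \<open>f\<close> to \<open>from_sphere (to_sphere f)\<close>, \<open>phi\<close> stays a positive
  multiple of \<open>phi\<close> at \<open>f\<close>, so the line can be pushed back into the complex by \<open>retract\<close>.\<close>
lemma phi_blend_nonzero: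
  assumes f: "f \<in> topspace X" and t: "0 \<le> t" "t \<le> 1"
  shows "\<exists>k<n. phi (blend_cycle t f) (blend_whisker t f) k \<noteq> 0"
proof -
  let ?a = "\<lambda>k. f (cycle_edge k)" and ?b = "\<lambda>k. f (whisker k)"
  let ?Q = "sqrt (\<Sum>i\<le>n - 1. (phi ?a ?b i)\<^sup>2)"
  obtain k where k: "k < n" "phi ?a ?b k \<noteq> 0"
    using phi_realization_nonzero[OF f] by blast
  then have "0 < ?Q" using sum_squares_pos[of k "n - 1"] by simp
  then have pos: "0 < t + (1 - t) / ?Q" using t by (cases "t = 1") (auto intro: add_nonneg_pos)
  have "phi (blend_cycle t f) (blend_whisker t f) k =
        t * phi ?a ?b k + (1 - t) * phi (lift_cycle (to_sphere f)) (lift_whisker (to_sphere f)) k"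
    unfolding blend_cycle_def[abs_def] blend_whisker_def[abs_def] by (rule phi_linear)
  also have "\<dots> = (t + (1 - t) / ?Q) * phi ?a ?b k"
    using k(1) by (simp add: phi_lift to_sphere_def sphere_normalize_def distrib_right)
  finally show ?thesis using k pos by auto
qed

definition deformation :: "real \<times> ((nat \<times> bool) set \<Rightarrow> real) \<Rightarrow> (nat \<times> bool) set \<Rightarrow> real" where
  "deformation = (\<lambda>(t, f). retract (blend_cycle t f) (blend_whisker t f))"

lemma continuous_map_deformation:
  "continuous_map (prod_topology (top_of_set {0..1}) X) X deformation"
  unfolding deformation_def case_prod_unfold
proof (rule continuous_map_retract)
  let ?Z = "prod_topology (top_of_set {0..1::real}) X"
  have cont_t: "continuous_map ?Z euclideanreal fst"
    using continuous_map_fst continuous_map_into_fulltopology by blast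
  have cont_f: "continuous_map ?Z euclideanreal (\<lambda>z. snd z e)" for e
    using continuous_map_compose[OF continuous_map_snd continuous_map_geometric_realization_coordinate]
    by (simp add: o_def)
  have cont_u: "continuous_map ?Z euclideanreal (\<lambda>z. to_sphere (snd z) k)" for k
    using continuous_map_compose[OF continuous_map_snd
        continuous_map_compose[OF continuous_map_to_sphere continuous_map_nsphere_projection]]
    by (simp add: o_def)
  fix k
  show "continuous_map ?Z euclideanreal (\<lambda>z. blend_cycle (fst z) (snd z) k)"
    "continuous_map ?Z euclideanreal (\<lambda>z. blend_whisker (fst z) (snd z) k)"
    unfolding blend_cycle_def blend_whisker_def lift_cycle_def lift_whisker_def
    by (intro continuous_intros cont_t cont_f cont_u)+
next
  fix z assume "z \<in> topspace (prod_topology (top_of_set {0..1::real}) X)"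
  then show "nonneg_weights (blend_cycle (fst z) (snd z)) (blend_whisker (fst z) (snd z))"
    "\<exists>k<n. phi (blend_cycle (fst z) (snd z)) (blend_whisker (fst z) (snd z)) k \<noteq> 0"
    by (auto intro!: nonneg_blend phi_blend_nonzero)
qed

theorem realization_homotopy_equivalent_nsphere: "X homotopy_equivalent_space nsphere (n - 1)"
proof (rule deformation_retraction_imp_homotopy_equivalent_space)
  show "retraction_maps X (nsphere (n - 1)) to_sphere from_sphere"
    using continuous_map_to_sphere continuous_map_from_sphere to_sphere_from_sphere
    by (simp add: retraction_maps_def)
  have "deformation (0, f) = from_sphere (to_sphere f)" "deformation (1, f) = f"
    if "f \<in> topspace X" for f
    using retract_of_realization[OF that]
    by (simp_all add: deformation_def from_sphere_def blend_cycle_def[abs_def]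
        blend_whisker_def[abs_def])
  then show "homotopic_with (\<lambda>x. True) X X (from_sphere \<circ> to_sphere) id"
    using continuous_map_deformation by (auto simp: homotopic_with)
qed

end

theorem mainTheorem8:
  fixes m :: nat
  assumes "m \<ge> 3"
  shows "geometric_realization (two_matching_complex (whiskered_cycle_edges m))
           homotopy_equivalent_space nsphere (2 * m - 1)"
proof -
  interpret whiskered_cycle_graph "2 * m"
    using assms by unfold_locales simp
  show ?thesis
    using realization_homotopy_equivalent_nsphere by (simp add: whiskered_cycle_edges_eq)
qed

end
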